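(* Let $G$ be a strongly connected directed graph on a finite vertex set (self-loops allowed) and let $\beta$ be a balanced graph function on $G$. Then $\beta$ is the unique balanced graph function in its equivalence class if and only if the graph $G_\beta^w$ is strongly connected for every real $w$.
   Context: A graph function on $G$ assigns a real weight $\beta_{uv}$ to every edge $(u,v)$ of $G$. For a vertex $v$, $\beta_v^{\text{in}}=\max_{u:(u,v)\in G}\beta_{uv}$ and $\beta_v^{\text{out}}=\max_{w:(v,w)\in G}\beta_{vw}$; $\beta$ is balanced if $\beta_v^{\text{in}}=\beta_v^{\text{out}}$ for all $v$. Two graph functions $\alpha,\gamma$ on $G$ are equivalent if $\sum_{\ell=1}^k(\alpha_{v_\ell v_{\ell+1}}-\gamma_{v_\ell v_{\ell+1}})=0$ for every directed cycle $(v_1,\dots,v_k)$ of $G$ (with $v_{k+1}=v_1$). For real $w$, $G_\beta^w$ is the subgraph of $G$ consisting of the edges $(u,v)$ with $\beta_{uv}\ge w$, with isolated vertices removed (a vertex carrying a self-loop is not considered isolated). *)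

theory Defs
  imports Main "HOL-Library.Extended_Real"
begin

text \<open>A graph function is a map
beta :: 'a => 'a => real; only its values on edges of E matter.\<close>

definition strongly_connected :: "'a set \<Rightarrow> ('a \<times> 'a) set \<Rightarrow> bool" where
  "strongly_connected V E \<longleftrightarrow> (\<forall>u\<in>V. \<forall>v\<in>V. (u, v) \<in> E\<^sup>*)"

definition beta_in :: "('a \<times> 'a) set \<Rightarrow> ('a \<Rightarrow> 'a \<Rightarrow> real) \<Rightarrow> 'a \<Rightarrow> real" where
  "beta_in E \<beta> v = Max {\<beta> u v | u. (u, v) \<in> E}"

definition beta_out :: "('a \<times> 'a) set \<Rightarrow> ('a \<Rightarrow> 'a \<Rightarrow> real) \<Rightarrow> 'a \<Rightarrow> real" where
  "beta_out E \<beta> v = Max {\<beta> v w | w. (v, w) \<in> E}"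

definition balanced :: "'a set \<Rightarrow> ('a \<times> 'a) set \<Rightarrow> ('a \<Rightarrow> 'a \<Rightarrow> real) \<Rightarrow> bool" where
  "balanced V E \<beta> \<longleftrightarrow> (\<forall>v\<in>V. beta_in E \<beta> v = beta_out E \<beta> v)"

definition directed_cycle :: "('a \<times> 'a) set \<Rightarrow> 'a list \<Rightarrow> bool" where
  "directed_cycle E vs \<longleftrightarrow> vs \<noteq> [] \<and> distinct vs \<and>
     (\<forall>i < length vs. (vs ! i, vs ! ((i + 1) mod length vs)) \<in> E)"

definition cycle_sum :: "('a \<Rightarrow> 'a \<Rightarrow> real) \<Rightarrow> 'a list \<Rightarrow> real" where
  "cycle_sum \<beta> vs = (\<Sum>i < length vs. \<beta> (vs ! i) (vs ! ((i + 1) mod length vs)))"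

definition equivalent :: "('a \<times> 'a) set \<Rightarrow> ('a \<Rightarrow> 'a \<Rightarrow> real) \<Rightarrow> ('a \<Rightarrow> 'a \<Rightarrow> real) \<Rightarrow> bool" where
  "equivalent E \<alpha> \<gamma> \<longleftrightarrow>
     (\<forall>vs. directed_cycle E vs \<longrightarrow> cycle_sum (\<lambda>u v. \<alpha> u v - \<gamma> u v) vs = 0)"

text \<open>G_beta^w: edges with weight \<ge> w, isolated vertices removed (a vertex is kept
iff it is incident to some remaining edge, self-loops included).\<close>
definition thr_edges :: "('a \<times> 'a) set \<Rightarrow> ('a \<Rightarrow> 'a \<Rightarrow> real) \<Rightarrow> real \<Rightarrow> ('a \<times> 'a) set" where
  "thr_edges E \<beta> w = {(u, v). (u, v) \<in> E \<and> \<beta> u v \<ge> w}"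

definition thr_verts :: "('a \<times> 'a) set \<Rightarrow> ('a \<Rightarrow> 'a \<Rightarrow> real) \<Rightarrow> real \<Rightarrow> 'a set" where
  "thr_verts E \<beta> w = fst ` thr_edges E \<beta> w \<union> snd ` thr_edges E \<beta> w"

end

theory Submission
  imports Defs
begin

text \<open>Two equivalent graph functions on a strongly connected graph differ by a potential,
  \<gamma> x y = \<beta> x y + p y - p x. Write G_w for the threshold graph of \<beta> at w. Suppose every G_w
  is strongly connected but p changes along some edge, and let g and b be the largest \<gamma>- and
  \<beta>-weights among such edges. Strong connectivity of G_b shows g > b. Balance of \<gamma> puts the
  p-minimal tail and the p-maximal head of the edges of \<gamma>-weight g into G_g, so strong
  connectivity of G_g yields an edge of \<beta>-weight at least g > b along which p increases, a
  contradiction.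

  Conversely, if G_w is not strongly connected, there are disjoint nonempty vertex sets A and A'
  such that A is closed under maximal out-edges and every vertex of A has a maximal in-edge coming
  from A, and dually for A'. A monotone fixpoint argument yields f with values in [0, 1], equal to
  1 on A and 0 on A', such that at every vertex the maximum of f over the tails of maximal in-edges
  plus the minimum of f over the heads of maximal out-edges is 2 f. For small \<epsilon> > 0 the function
  \<beta> x y + \<epsilon> (f x - f y) is then balanced, equivalent to \<beta> and different from it.\<close>

abbreviation walk :: "('a \<times> 'a) set \<Rightarrow> 'a list \<Rightarrow> bool" where
  "walk E \<equiv> successively (\<lambda>x y. (x, y) \<in> E)"

fun walk_sum :: "('a \<Rightarrow> 'a \<Rightarrow> real) \<Rightarrow> 'a list \<Rightarrow> real" where
  "walk_sum d (x # y # xs) = d x y + walk_sum d (y # xs)"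
| "walk_sum d _ = 0"

lemma walk_sum_append:
  "walk_sum d (xs @ y # ys) = walk_sum d (xs @ [y]) + walk_sum d (y # ys)"
  by (induction xs rule: induct_list012) auto

lemma walk_append_Cons:
  "walk E (xs @ y # ys) \<longleftrightarrow> walk E (xs @ [y]) \<and> walk E (y # ys)"
  by (induction xs rule: induct_list012) auto

lemma walk_sum_telescope:
  "xs \<noteq> [] \<Longrightarrow> walk_sum (\<lambda>x y. q x - q y) xs = q (hd xs) - q (last xs)"
  by (induction xs rule: induct_list012) auto

lemma walk_sum_conv_sum:
  "walk_sum d xs = (\<Sum>i < length xs - 1. d (xs ! i) (xs ! Suc i))"
proof (induction d xs rule: walk_sum.induct)
  case (1 d x y xs)
  then show ?case
    by (simp del: sum.lessThan_Suc add: sum.lessThan_Suc_shift[of _ "length xs"])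
qed auto

lemma walk_iff_nth:
  "walk E xs \<longleftrightarrow> (\<forall>i. Suc i < length xs \<longrightarrow> (xs ! i, xs ! Suc i) \<in> E)"
proof (induction xs rule: induct_list012)
  case (3 x y xs)
  then show ?case
    by (auto simp: nth_Cons split: nat.splits)
qed auto

lemma nth_append_hd_Suc:
  assumes "i < length vs"
  shows "(vs @ [hd vs]) ! Suc i = vs ! (Suc i mod length vs)"
proof (cases "Suc i < length vs")
  case False
  then have "Suc i = length vs" using assms by simp
  moreover have "vs \<noteq> []" using assms by auto
  ultimately show ?thesis by (simp add: hd_conv_nth)
qed (simp add: nth_append)

lemma cycle_sum_eq_walk_sum:
  "vs \<noteq> [] \<Longrightarrow> cycle_sum d vs = walk_sum d (vs @ [hd vs])"
  unfolding cycle_sum_def walk_sum_conv_sum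
  by (intro sum.cong) (simp_all add: nth_append_hd_Suc nth_append_left)

lemma directed_cycle_if_closed_walk:
  assumes "vs \<noteq> []" "distinct vs" "walk E (vs @ [hd vs])"
  shows "directed_cycle E vs"
  unfolding directed_cycle_def
proof (intro conjI allI impI)
  fix i assume "i < length vs"
  then show "(vs ! i, vs ! ((i + 1) mod length vs)) \<in> E"
    using assms(3) nth_append_hd_Suc[of i vs] by (auto simp: walk_iff_nth nth_append_left)
qed (use assms in auto)

lemma walk_split_at_repeat:
  assumes "walk E (A @ x # B @ x # C)"
  shows "walk E (A @ x # C)" "walk E (x # B @ [x])"
    "walk_sum d (A @ x # B @ x # C) = walk_sum d (A @ x # C) + walk_sum d (x # B @ [x])"
  using assms walk_append_Cons[of E A x "B @ x # C"] walk_append_Cons[of E A x C]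
    walk_append_Cons[of E "x # B" x C] walk_sum_append[of d A x "B @ x # C"]
    walk_sum_append[of d A x C] walk_sum_append[of d "x # B" x C]
  by simp_all

lemma closed_walk_sum_zero:
  assumes cycles: "\<forall>vs. directed_cycle E vs \<longrightarrow> cycle_sum d vs = 0"
    and "walk E xs" "xs \<noteq> []" "hd xs = last xs"
  shows "walk_sum d xs = 0"
  using assms(2-)
proof (induction "length xs" arbitrary: xs rule: less_induct)
  case less
  define vs where "vs = butlast xs"
  show ?case
  proof (cases "vs = []")
    case True
    then show ?thesis using less.prems(2) unfolding vs_def by (cases xs rule: rev_cases) auto
  next
    case False
    have xs: "xs = vs @ [hd vs]"
      using less.prems False unfolding vs_def by (metis append_butlast_last_id hd_append2)
    show ?thesis
    proof (cases "distinct vs")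
      case True
      then have "directed_cycle E vs"
        using directed_cycle_if_closed_walk False less.prems(1) xs by metis
      then show ?thesis using cycles cycle_sum_eq_walk_sum[OF False] xs by metis
    next
      case False
      then obtain A x B C where "vs = A @ [x] @ B @ [x] @ C" using not_distinct_decomp by blast
      then have split: "xs = A @ x # B @ x # C @ [hd vs]" and hd_vs: "hd vs = hd (A @ [x])"
        using xs by (simp, cases A, simp_all)
      let ?outer = "A @ x # C @ [hd vs]" and ?inner = "x # B @ [x]"
      have "hd ?outer = last ?outer" using hd_vs by (cases A) simp_all
      then show ?thesis
        using walk_split_at_repeat[of E A x B "C @ [hd vs]"] less.prems(1)
          less.hyps[of ?outer] less.hyps[of ?inner] unfolding split by simp
    qed
  qed
qed

lemma rtrancl_imp_walk:
  assumes "(a, b) \<in> E\<^sup>*"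
  obtains xs where "walk E xs" "xs \<noteq> []" "hd xs = a" "last xs = b"
  using assms
proof (induction arbitrary: thesis rule: rtrancl_induct)
  case base
  then show ?case using base.prems[of "[a]"] by simp
next
  case (step y z)
  then obtain xs where "walk E xs" "xs \<noteq> []" "hd xs = a" "last xs = y" by blast
  with step.hyps(2) show ?case
    using step.prems[of "xs @ [z]"] by (simp add: successively_append_iff)
qed

lemma potential_if_cycle_sums_zero:
  assumes "E \<subseteq> V \<times> V" and sc: "strongly_connected V E"
    and cycles: "\<forall>vs. directed_cycle E vs \<longrightarrow> cycle_sum d vs = 0"
  obtains p where "\<And>x y. (x, y) \<in> E \<Longrightarrow> d x y = p y - p x"
proof (cases "V = {}")
  case True
  with assms(1) show ?thesis using that by auto
next
  case False
  then obtain r where r: "r \<in> V" by blast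
  have "\<exists>xs. walk E xs \<and> xs \<noteq> [] \<and> hd xs = v \<and> last xs = r" if "v \<in> V" for v
    using sc r that unfolding strongly_connected_def by (metis rtrancl_imp_walk)
  then obtain W where W: "\<And>v. v \<in> V \<Longrightarrow> walk E (W v) \<and> W v \<noteq> [] \<and> hd (W v) = v \<and> last (W v) = r"
    by metis
  show ?thesis
  proof (rule that)
    fix x y assume xy: "(x, y) \<in> E"
    then have "x \<in> V" "y \<in> V" using assms(1) by auto
    then obtain Wx Wy where Wx: "W x = x # Wx" "walk E (x # Wx)" "last (x # Wx) = r"
      and Wy: "W y = y # Wy" "walk E (y # Wy)" "last (y # Wy) = r"
      using W by (metis list.collapse)
    obtain U where U: "walk E (U @ [x])" "hd (U @ [x]) = r"
      using sc r \<open>x \<in> V\<close> unfolding strongly_connected_def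
      by (metis rtrancl_imp_walk append_butlast_last_id)
    \<comment> \<open>Closing U with W x, resp. with the edge xy and W y, gives two closed walks.\<close>
    have hd_U: "hd (U @ x # zs) = r" for zs using U(2) by (cases U) simp_all
    have "walk_sum d (U @ x # Wx) = 0" "walk_sum d (U @ x # y # Wy) = 0"
      using U(1) Wx Wy xy walk_append_Cons[of E U x Wx] walk_append_Cons[of E U x "y # Wy"] hd_U
      by (simp_all add: closed_walk_sum_zero[OF cycles])
    then show "d x y = (- walk_sum d (W y)) - (- walk_sum d (W x))"
      using walk_sum_append[of d U x Wx] walk_sum_append[of d U x "y # Wy"] Wx Wy by simp
  qed
qed

lemma cycle_sum_potential_difference:
  "cycle_sum (\<lambda>x y. q x - q y) vs = 0"
  by (cases "vs = []") (simp_all add: cycle_sum_eq_walk_sum walk_sum_telescope, simp add: cycle_sum_def)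

lemma beta_out_eq_Max_image: "beta_out E \<beta> v = Max (\<beta> v ` (E `` {v}))"
  unfolding beta_out_def by (rule arg_cong[where f = Max]) auto

lemma beta_in_eq_Max_image: "beta_in E \<beta> v = Max ((\<lambda>u. \<beta> u v) ` (E\<inverse> `` {v}))"
  unfolding beta_in_def by (rule arg_cong[where f = Max]) auto

lemma beta_out_ge: "finite E \<Longrightarrow> (v, y) \<in> E \<Longrightarrow> \<beta> v y \<le> beta_out E \<beta> v"
  unfolding beta_out_eq_Max_image by (rule Max_ge) auto

lemma beta_in_ge: "finite E \<Longrightarrow> (x, v) \<in> E \<Longrightarrow> \<beta> x v \<le> beta_in E \<beta> v"
  unfolding beta_in_eq_Max_image by (rule Max_ge) auto

lemma beta_out_attained:
  assumes "finite E" "(v, y0) \<in> E"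
  obtains y where "(v, y) \<in> E" "\<beta> v y = beta_out E \<beta> v"
proof -
  have "beta_out E \<beta> v \<in> \<beta> v ` (E `` {v})"
    unfolding beta_out_eq_Max_image using assms by (intro Max_in) auto
  then show ?thesis using that by auto
qed

lemma beta_in_attained:
  assumes "finite E" "(x0, v) \<in> E"
  obtains x where "(x, v) \<in> E" "\<beta> x v = beta_in E \<beta> v"
proof -
  have "beta_in E \<beta> v \<in> (\<lambda>u. \<beta> u v) ` (E\<inverse> `` {v})"
    unfolding beta_in_eq_Max_image using assms by (intro Max_in) auto
  then show ?thesis using that by auto
qed

lemma beta_out_eqI:
  assumes "finite E" "(v, y) \<in> E" "\<beta> v y = c" "\<And>y'. (v, y') \<in> E \<Longrightarrow> \<beta> v y' \<le> c"
  shows "beta_out E \<beta> v = c"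
  unfolding beta_out_eq_Max_image using assms by (intro Max_eqI) auto

lemma beta_in_eqI:
  assumes "finite E" "(x, v) \<in> E" "\<beta> x v = c" "\<And>x'. (x', v) \<in> E \<Longrightarrow> \<beta> x' v \<le> c"
  shows "beta_in E \<beta> v = c"
  unfolding beta_in_eq_Max_image using assms by (intro Max_eqI) auto

lemma strongly_connected_out_edge:
  assumes "E \<subseteq> V \<times> V" "strongly_connected V E" "(a, b) \<in> E" "v \<in> V"
  obtains y where "(v, y) \<in> E"
proof -
  have "(v, a) \<in> E\<^sup>*" using assms unfolding strongly_connected_def by auto
  then show ?thesis using assms(3) that by (cases rule: converse_rtranclE) auto
qed

lemma strongly_connected_in_edge:
  assumes "E \<subseteq> V \<times> V" "strongly_connected V E" "(a, b) \<in> E" "v \<in> V"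
  obtains x where "(x, v) \<in> E"
proof -
  have "(b, v) \<in> E\<^sup>*" using assms unfolding strongly_connected_def by auto
  then show ?thesis using assms(3) that by (cases rule: rtranclE) auto
qed

lemma rtrancl_increasing_edge:
  fixes p :: "'a \<Rightarrow> 'b::linorder"
  assumes "(x, y) \<in> E\<^sup>*" "p x < p y"
  obtains a c where "(a, c) \<in> E" "p a < p c"
  using assms
proof (induction arbitrary: thesis rule: rtrancl_induct)
  case (step y z)
  then show ?case by (cases "p x < p y") (auto simp: not_less intro: le_less_trans)
qed simp

lemma strongly_connected_increasing_edge:
  fixes p :: "'a \<Rightarrow> 'b::linorder"
  assumes "strongly_connected V E" "x \<in> V" "y \<in> V" "p x \<noteq> p y"
  obtains a c where "(a, c) \<in> E" "p a < p c"
  using assms rtrancl_increasing_edge unfolding strongly_connected_def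
  by (metis linorder_neq_iff)

lemma increasing_relation_source_sink:
  fixes p :: "'a \<Rightarrow> 'b::linorder"
  assumes "finite F" "F \<noteq> {}" and incr: "\<And>s t. (s, t) \<in> F \<Longrightarrow> p s < p t"
  obtains s t where "s \<in> Domain F" "s \<notin> Range F" "t \<in> Range F" "t \<notin> Domain F" "p s < p t"
proof -
  have fin: "finite (Domain F)" "finite (Range F)" and ne: "Domain F \<noteq> {}" "Range F \<noteq> {}"
    using assms(1,2) by (auto simp: finite_Domain finite_Range)
  obtain s where s: "s \<in> Domain F" "Min (p ` Domain F) = p s" using obtains_MIN[OF fin(1) ne(1)] .
  obtain t where t: "t \<in> Range F" "Max (p ` Range F) = p t" using obtains_MAX[OF fin(2) ne(2)] .
  have s_min: "p s \<le> p z" if "z \<in> Domain F" for z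
    using s(2) fin(1) that by (metis Min_le finite_imageI imageI)
  have t_max: "p z \<le> p t" if "z \<in> Range F" for z
    using t(2) fin(2) that by (metis Max_ge finite_imageI imageI)
  show ?thesis
  proof
    show "s \<notin> Range F"
    proof
      assume "s \<in> Range F"
      then obtain z where "(z, s) \<in> F" by blast
      then show False using incr s_min by (meson DomainI leD)
    qed
    show "t \<notin> Domain F"
    proof
      assume "t \<in> Domain F"
      then obtain z where "(t, z) \<in> F" by blast
      then show False using incr t_max by (meson RangeI leD)
    qed
    obtain t' where "(s, t') \<in> F" using s(1) by blast
    then show "p s < p t" using incr t_max by (meson RangeI less_le_trans)
  qed (use s t in auto)
qed

lemma thr_verts_if_thr_edge:
  "(x, y) \<in> thr_edges E \<beta> w \<Longrightarrow> x \<in> thr_verts E \<beta> w \<and> y \<in> thr_verts E \<beta> w"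
  unfolding thr_verts_def by force

lemma balanced_in_edge_ge:
  assumes "finite E" "E \<subseteq> V \<times> V" "strongly_connected V E" "balanced V E \<gamma>" "(s, t) \<in> E"
  obtains z where "(z, s) \<in> E" "\<gamma> s t \<le> \<gamma> z s"
proof -
  have "s \<in> V" using assms(2,5) by auto
  then obtain z0 where "(z0, s) \<in> E" using strongly_connected_in_edge assms(2,3,5) by metis
  then obtain z where "(z, s) \<in> E" "\<gamma> z s = beta_in E \<gamma> s" using beta_in_attained assms(1) by metis
  moreover have "\<gamma> s t \<le> beta_in E \<gamma> s"
    using beta_out_ge[OF assms(1,5)] assms(4) \<open>s \<in> V\<close> by (simp add: balanced_def)
  ultimately show ?thesis using that by simp
qed

lemma balanced_out_edge_ge:
  assumes "finite E" "E \<subseteq> V \<times> V" "strongly_connected V E" "balanced V E \<gamma>" "(s, t) \<in> E"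
  obtains r where "(t, r) \<in> E" "\<gamma> s t \<le> \<gamma> t r"
proof -
  have "t \<in> V" using assms(2,5) by auto
  then obtain r0 where "(t, r0) \<in> E" using strongly_connected_out_edge assms(2,3,5) by metis
  then obtain r where "(t, r) \<in> E" "\<gamma> t r = beta_out E \<gamma> t" using beta_out_attained assms(1) by metis
  moreover have "\<gamma> s t \<le> beta_out E \<gamma> t"
    using beta_in_ge[OF assms(1,5), of \<gamma>] assms(4) \<open>t \<in> V\<close> by (simp add: balanced_def)
  ultimately show ?thesis using that by simp
qed

lemma heaviest_nonconstant_edges_meet_threshold:
  assumes finE: "finite E" and EV: "E \<subseteq> V \<times> V" and sc: "strongly_connected V E"
    and bal: "balanced V E \<gamma>"
    and pot: "\<And>x y. (x, y) \<in> E \<Longrightarrow> \<gamma> x y = \<beta> x y + (p y - p x)"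
    and g_max: "\<And>x y. (x, y) \<in> E \<Longrightarrow> p x \<noteq> p y \<Longrightarrow> \<gamma> x y \<le> g"
    and g_attained: "(x0, y0) \<in> E" "p x0 \<noteq> p y0" "\<gamma> x0 y0 = g"
    and below_g: "\<And>x y. (x, y) \<in> E \<Longrightarrow> p x \<noteq> p y \<Longrightarrow> \<beta> x y < g"
  obtains s t where "s \<in> thr_verts E \<beta> g" "t \<in> thr_verts E \<beta> g" "p s < p t"
proof -
  define F where "F = {(x, y) \<in> E. p x \<noteq> p y \<and> \<gamma> x y = g}"
  have "F \<subseteq> E" by (auto simp: F_def)
  then have F: "finite F" "F \<noteq> {}" using finE finite_subset g_attained by (auto simp: F_def)
  have F_incr: "p x < p y" if "(x, y) \<in> F" for x y
    using that pot[of x y] below_g[of x y] by (force simp: F_def)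
  have F_or_thr: "(x, y) \<in> F \<or> (x, y) \<in> thr_edges E \<beta> g" if "(x, y) \<in> E" "g \<le> \<gamma> x y" for x y
    using that pot[of x y] g_max[of x y] by (force simp: F_def thr_edges_def)
  obtain s t where st: "s \<in> Domain F" "s \<notin> Range F" "t \<in> Range F" "t \<notin> Domain F" "p s < p t"
    using increasing_relation_source_sink[of F p] F F_incr by blast
  \<comment> \<open>By balance of \<gamma>, s and t lie on edges of \<gamma>-weight at least g; these are not in F,
    so p is constant on them and their \<beta>-weight is at least g.\<close>
  have "s \<in> thr_verts E \<beta> g"
  proof -
    obtain t' where "(s, t') \<in> F" using st(1) by blast
    then obtain z where "(z, s) \<in> E" "g \<le> \<gamma> z s"
      using balanced_in_edge_ge[OF finE EV sc bal] by (force simp: F_def)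
    then have "(z, s) \<in> thr_edges E \<beta> g" using F_or_thr st(2) by blast
    from thr_verts_if_thr_edge[OF this] show ?thesis by simp
  qed
  moreover have "t \<in> thr_verts E \<beta> g"
  proof -
    obtain s' where "(s', t) \<in> F" using st(3) by blast
    then obtain r where "(t, r) \<in> E" "g \<le> \<gamma> t r"
      using balanced_out_edge_ge[OF finE EV sc bal] by (force simp: F_def)
    then have "(t, r) \<in> thr_edges E \<beta> g" using F_or_thr st(4) by blast
    from thr_verts_if_thr_edge[OF this] show ?thesis by simp
  qed
  ultimately show ?thesis using that st(5) by blast
qed

lemma potential_constant_if_thresholds_strongly_connected:
  assumes finE: "finite E" and EV: "E \<subseteq> V \<times> V" and sc: "strongly_connected V E"
    and bal: "balanced V E \<gamma>"
    and thr: "\<And>w. strongly_connected (thr_verts E \<beta> w) (thr_edges E \<beta> w)"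
    and pot: "\<And>x y. (x, y) \<in> E \<Longrightarrow> \<gamma> x y = \<beta> x y + (p y - p x)"
  shows "\<forall>(x, y) \<in> E. p x = p y"
proof (rule ccontr)
  define D where "D = {(x, y) \<in> E. p x \<noteq> p y}"
  assume "\<not> (\<forall>(x, y) \<in> E. p x = p y)"
  moreover have "D \<subseteq> E" by (auto simp: D_def)
  ultimately have D: "finite D" "D \<noteq> {}" using finE finite_subset by (auto simp: D_def)
  define b where "b = Max ((\<lambda>(x, y). \<beta> x y) ` D)"
  define g where "g = Max ((\<lambda>(x, y). \<gamma> x y) ` D)"
  have b_ge: "\<beta> x y \<le> b" and g_ge: "\<gamma> x y \<le> g" if "(x, y) \<in> D" for x y
    using D that unfolding b_def g_def by (force intro: Max_ge)+
  have "b < g"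
  proof -
    \<comment> \<open>Connectivity of G_b yields an edge of D of \<beta>-weight b along which p increases.\<close>
    have "b \<in> (\<lambda>(x, y). \<beta> x y) ` D" unfolding b_def using D by (intro Max_in) auto
    then obtain x y where xy: "(x, y) \<in> D" "\<beta> x y = b" by auto
    then have "x \<in> thr_verts E \<beta> b" "y \<in> thr_verts E \<beta> b" "p x \<noteq> p y"
      using thr_verts_if_thr_edge[of x y E \<beta> b] by (auto simp: D_def thr_edges_def)
    then obtain a c where ac: "(a, c) \<in> thr_edges E \<beta> b" "p a < p c"
      using strongly_connected_increasing_edge[OF thr] by metis
    then have "(a, c) \<in> D" "\<beta> a c = b" using b_ge by (force simp: D_def thr_edges_def)+
    then show ?thesis using pot[of a c] g_ge[of a c] ac(2) by (simp add: D_def)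
  qed
  have "g \<in> (\<lambda>(x, y). \<gamma> x y) ` D" unfolding g_def using D by (intro Max_in) auto
  then obtain x0 y0 where x0y0: "(x0, y0) \<in> E" "p x0 \<noteq> p y0" "\<gamma> x0 y0 = g"
    by (auto simp: D_def)
  have "\<gamma> x y \<le> g" "\<beta> x y < g" if "(x, y) \<in> E" "p x \<noteq> p y" for x y
    using that g_ge[of x y] b_ge[of x y] \<open>b < g\<close> by (auto simp: D_def)
  then obtain s t where "s \<in> thr_verts E \<beta> g" "t \<in> thr_verts E \<beta> g" "p s < p t"
    using heaviest_nonconstant_edges_meet_threshold[OF finE EV sc bal pot _ x0y0] by blast
  then obtain a c where "(a, c) \<in> thr_edges E \<beta> g" "p a < p c"
    using strongly_connected_increasing_edge[OF thr] by (metis order_less_irrefl)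
  then show False using b_ge[of a c] \<open>b < g\<close> by (force simp: D_def thr_edges_def)
qed

lemma terminal_class_exists:
  assumes "finite X" "X \<noteq> {}" "R `` X \<subseteq> X" "\<forall>v\<in>X. \<exists>y. (v, y) \<in> R"
  obtains A where "A \<subseteq> X" "A \<noteq> {}" "R `` A \<subseteq> A"
    "\<And>v. v \<in> A \<Longrightarrow> \<exists>x\<in>A. (x, v) \<in> R \<and> (v, x) \<in> R\<^sup>*"
proof -
  have closed: "R\<^sup>* `` X = X" using assms(3) by (rule Image_closed_trancl)
  \<comment> \<open>Choose u in X whose set of reachable vertices is minimal; then all of them reach u again.\<close>
  obtain u where u: "u \<in> X"
    and minimal: "\<And>v. v \<in> X \<Longrightarrow> R\<^sup>* `` {v} \<subseteq> R\<^sup>* `` {u} \<Longrightarrow> R\<^sup>* `` {u} = R\<^sup>* `` {v}"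
    using finite_has_minimal[of "(\<lambda>x. R\<^sup>* `` {x}) ` X"] assms(1,2) by auto
  define A where "A = R\<^sup>* `` {u}"
  have A_X: "A \<subseteq> X" using closed u unfolding A_def by blast
  have reaches_u: "(v, u) \<in> R\<^sup>*" if "v \<in> A" for v
  proof -
    have "R\<^sup>* `` {v} \<subseteq> A" using that unfolding A_def by (auto intro: rtrancl_trans)
    then have "R\<^sup>* `` {v} = A" using minimal A_X that unfolding A_def by blast
    then show ?thesis unfolding A_def by blast
  qed
  show ?thesis
  proof
    show "A \<subseteq> X" by (rule A_X)
    show "A \<noteq> {}" unfolding A_def by blast
    show "R `` A \<subseteq> A" unfolding A_def by (auto intro: rtrancl_into_rtrancl)
    fix v assume v: "v \<in> A"
    then obtain y where vy: "(v, y) \<in> R" using assms(4) A_X by blast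
    then have "y \<in> A" using v unfolding A_def by (auto intro: rtrancl_into_rtrancl)
    then have "(y, v) \<in> R\<^sup>*" using reaches_u v unfolding A_def by (blast intro: rtrancl_trans)
    then have "(v, v) \<in> R\<^sup>+" using vy by (blast intro: rtrancl_into_trancl2)
    then obtain x where "(v, x) \<in> R\<^sup>*" "(x, v) \<in> R" by (blast dest: tranclD2)
    moreover have "x \<in> A" using v \<open>(v, x) \<in> R\<^sup>*\<close> unfolding A_def by (blast intro: rtrancl_trans)
    ultimately show "\<exists>x\<in>A. (x, v) \<in> R \<and> (v, x) \<in> R\<^sup>*" by blast
  qed
qed

definition max_out_edges :: "('a \<times> 'a) set \<Rightarrow> ('a \<Rightarrow> 'a \<Rightarrow> real) \<Rightarrow> ('a \<times> 'a) set" where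
  "max_out_edges E \<beta> = {(x, y) \<in> E. \<beta> x y = beta_out E \<beta> x}"

definition max_in_edges :: "('a \<times> 'a) set \<Rightarrow> ('a \<Rightarrow> 'a \<Rightarrow> real) \<Rightarrow> ('a \<times> 'a) set" where
  "max_in_edges E \<beta> = {(x, y) \<in> E. \<beta> x y = beta_in E \<beta> y}"

lemma max_out_edge_exists:
  assumes "finite E" "E \<subseteq> V \<times> V" "strongly_connected V E" "E \<noteq> {}" "v \<in> V"
  shows "\<exists>y. (v, y) \<in> max_out_edges E \<beta>"
proof -
  obtain y0 where "(v, y0) \<in> E" using strongly_connected_out_edge assms(2-5) by (metis ex_in_conv prod.exhaust)
  then obtain y where "(v, y) \<in> E" "\<beta> v y = beta_out E \<beta> v" using beta_out_attained assms(1) by metis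
  then show ?thesis by (auto simp: max_out_edges_def)
qed

lemma max_in_edge_exists:
  assumes "finite E" "E \<subseteq> V \<times> V" "strongly_connected V E" "E \<noteq> {}" "v \<in> V"
  shows "\<exists>x. (x, v) \<in> max_in_edges E \<beta>"
proof -
  obtain x0 where "(x0, v) \<in> E" using strongly_connected_in_edge assms(2-5) by (metis ex_in_conv prod.exhaust)
  then obtain x where "(x, v) \<in> E" "\<beta> x v = beta_in E \<beta> v" using beta_in_attained assms(1) by metis
  then show ?thesis by (auto simp: max_in_edges_def)
qed

lemma max_out_edge_on_cycle:
  assumes finE: "finite E" and EV: "E \<subseteq> V \<times> V" and bal: "balanced V E \<beta>"
    and "(x, y) \<in> max_out_edges E \<beta>" "(y, x) \<in> (max_out_edges E \<beta>)\<^sup>*"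
  shows "(x, y) \<in> max_in_edges E \<beta>"
proof -
  have in_eq_out: "beta_in E \<beta> b = beta_out E \<beta> b" if "(a, b) \<in> E" for a b
    using bal EV that by (auto simp: balanced_def)
  have step: "beta_out E \<beta> a \<le> beta_out E \<beta> b" if "(a, b) \<in> max_out_edges E \<beta>" for a b
    using that beta_in_ge[OF finE, of a b \<beta>] in_eq_out by (auto simp: max_out_edges_def)
  have "beta_out E \<beta> y \<le> beta_out E \<beta> x"
    using assms(5) by induction (auto dest: step)
  then show ?thesis
    using assms(4) beta_in_ge[OF finE, of x y \<beta>] in_eq_out[of x y]
    by (auto simp: max_out_edges_def max_in_edges_def)
qed

lemma max_in_edge_on_cycle:
  assumes finE: "finite E" and EV: "E \<subseteq> V \<times> V" and bal: "balanced V E \<beta>"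
    and "(x, y) \<in> max_in_edges E \<beta>" "(y, x) \<in> (max_in_edges E \<beta>)\<^sup>*"
  shows "(x, y) \<in> max_out_edges E \<beta>"
proof -
  have in_eq_out: "beta_in E \<beta> a = beta_out E \<beta> a" if "(a, b) \<in> E" for a b
    using bal EV that by (auto simp: balanced_def)
  have step: "beta_in E \<beta> b \<le> beta_in E \<beta> a" if "(a, b) \<in> max_in_edges E \<beta>" for a b
    using that beta_out_ge[OF finE, of a b \<beta>] in_eq_out by (auto simp: max_in_edges_def)
  have "beta_in E \<beta> x \<le> beta_in E \<beta> y"
    using assms(5) by induction (auto dest: step)
  then show ?thesis
    using assms(4) beta_out_ge[OF finE, of x y \<beta>] in_eq_out[of x y]
    by (auto simp: max_out_edges_def max_in_edges_def)
qed

lemma thr_verts_subset: "E \<subseteq> V \<times> V \<Longrightarrow> thr_verts E \<beta> w \<subseteq> V"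
  unfolding thr_verts_def thr_edges_def by auto

lemma beta_out_ge_if_thr_vert:
  assumes finE: "finite E" and EV: "E \<subseteq> V \<times> V" and bal: "balanced V E \<beta>"
    and v: "v \<in> thr_verts E \<beta> w"
  shows "w \<le> beta_out E \<beta> v"
proof -
  have "v \<in> V" using thr_verts_subset[OF EV] v by blast
  then have "beta_in E \<beta> v = beta_out E \<beta> v" using bal by (simp add: balanced_def)
  then show ?thesis
    using v beta_out_ge[OF finE, of v _ \<beta>] beta_in_ge[OF finE, of _ v \<beta>]
    unfolding thr_verts_def thr_edges_def by force
qed

lemma closed_sets_if_threshold_not_strongly_connected:
  assumes finE: "finite E" and EV: "E \<subseteq> V \<times> V" and bal: "balanced V E \<beta>"
    and nsc: "\<not> strongly_connected (thr_verts E \<beta> w) (thr_edges E \<beta> w)"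
  obtains X Z where "X \<subseteq> V" "Z \<subseteq> V" "X \<inter> Z = {}" "X \<noteq> {}" "Z \<noteq> {}"
    "max_out_edges E \<beta> `` X \<subseteq> X" "(max_in_edges E \<beta>)\<inverse> `` Z \<subseteq> Z"
proof -
  define H where "H = thr_edges E \<beta> w"
  define Y where "Y = thr_verts E \<beta> w"
  obtain x0 y0 where xy0: "x0 \<in> Y" "y0 \<in> Y" "(x0, y0) \<notin> H\<^sup>*"
    using nsc unfolding strongly_connected_def H_def Y_def by blast
  have H_Y: "x \<in> Y \<and> y \<in> Y" if "(x, y) \<in> H" for x y
    using that thr_verts_if_thr_edge unfolding H_def Y_def by metis
  have Y_V: "Y \<subseteq> V" using thr_verts_subset[OF EV] unfolding Y_def .
  have Y_ge: "w \<le> beta_out E \<beta> v" if "v \<in> Y" for v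
    using beta_out_ge_if_thr_vert[OF finE EV bal] that unfolding Y_def .
  \<comment> \<open>The maximal out- and in-edges of a vertex of G_w belong to G_w.\<close>
  define X where "X = H\<^sup>* `` {x0}"
  have X_Y: "X \<subseteq> Y" unfolding X_def using xy0(1) H_Y by (auto elim: rtranclE)
  define Z where "Z = Y - X"
  show ?thesis
  proof
    show "X \<subseteq> V" "Z \<subseteq> V" "X \<inter> Z = {}" using X_Y Y_V by (auto simp: Z_def)
    show "X \<noteq> {}" "Z \<noteq> {}" using xy0 by (auto simp: X_def Z_def)
    show "max_out_edges E \<beta> `` X \<subseteq> X"
    proof clarify
      fix v y assume "v \<in> X" "(v, y) \<in> max_out_edges E \<beta>"
      then have "(v, y) \<in> H"
        using Y_ge X_Y unfolding H_def max_out_edges_def thr_edges_def by force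
      then show "y \<in> X" using \<open>v \<in> X\<close> unfolding X_def by (auto intro: rtrancl_into_rtrancl)
    qed
    show "(max_in_edges E \<beta>)\<inverse> `` Z \<subseteq> Z"
    proof clarify
      fix z x assume "z \<in> Z" "(x, z) \<in> max_in_edges E \<beta>"
      moreover have "beta_in E \<beta> z = beta_out E \<beta> z"
        using \<open>z \<in> Z\<close> Y_V bal by (auto simp: Z_def balanced_def)
      ultimately have "(x, z) \<in> H"
        using Y_ge unfolding H_def max_in_edges_def thr_edges_def Z_def by force
      then show "x \<in> Z"
        using \<open>z \<in> Z\<close> H_Y unfolding Z_def X_def by (auto intro: rtrancl_into_rtrancl)
    qed
  qed
qed

lemma max_edge_classes_if_threshold_not_strongly_connected:
  assumes finV: "finite V" and EV: "E \<subseteq> V \<times> V" and sc: "strongly_connected V E"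
    and bal: "balanced V E \<beta>"
    and nsc: "\<not> strongly_connected (thr_verts E \<beta> w) (thr_edges E \<beta> w)"
  obtains A A' where "A \<subseteq> V" "A' \<subseteq> V" "A \<inter> A' = {}" "A \<noteq> {}" "A' \<noteq> {}"
    "max_out_edges E \<beta> `` A \<subseteq> A" "\<forall>v\<in>A. \<exists>x\<in>A. (x, v) \<in> max_in_edges E \<beta>"
    "(max_in_edges E \<beta>)\<inverse> `` A' \<subseteq> A'" "\<forall>v\<in>A'. \<exists>y\<in>A'. (v, y) \<in> max_out_edges E \<beta>"
proof -
  let ?O = "max_out_edges E \<beta>" and ?I = "max_in_edges E \<beta>"
  have finE: "finite E" using finV EV finite_subset by blast
  have "E \<noteq> {}"
    using nsc by (auto simp: strongly_connected_def thr_verts_def thr_edges_def)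
  note O_ex = max_out_edge_exists[OF finE EV sc this] and I_ex = max_in_edge_exists[OF finE EV sc this]
  obtain X Z where XZ: "X \<subseteq> V" "Z \<subseteq> V" "X \<inter> Z = {}" "X \<noteq> {}" "Z \<noteq> {}"
    and X_closed: "?O `` X \<subseteq> X" and Z_closed: "?I\<inverse> `` Z \<subseteq> Z"
    using closed_sets_if_threshold_not_strongly_connected[OF finE EV bal nsc] by blast
  have fin: "finite X" "finite Z" using XZ(1,2) finV by (auto intro: finite_subset)
  have "\<forall>v\<in>X. \<exists>y. (v, y) \<in> ?O" "\<forall>v\<in>Z. \<exists>y. (v, y) \<in> ?I\<inverse>"
    using O_ex I_ex XZ(1,2) by blast+
  obtain A where A: "A \<subseteq> X" "A \<noteq> {}" "?O `` A \<subseteq> A"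
    and A_cycle: "\<And>v. v \<in> A \<Longrightarrow> \<exists>x\<in>A. (x, v) \<in> ?O \<and> (v, x) \<in> ?O\<^sup>*"
    using terminal_class_exists[OF fin(1) XZ(4) X_closed \<open>\<forall>v\<in>X. _\<close>] by metis
  obtain A' where A': "A' \<subseteq> Z" "A' \<noteq> {}" "?I\<inverse> `` A' \<subseteq> A'"
    and A'_cycle: "\<And>v. v \<in> A' \<Longrightarrow> \<exists>y\<in>A'. (y, v) \<in> ?I\<inverse> \<and> (v, y) \<in> (?I\<inverse>)\<^sup>*"
    using terminal_class_exists[OF fin(2) XZ(5) Z_closed \<open>\<forall>v\<in>Z. _\<close>] by metis
  show ?thesis
  proof
    show "A \<subseteq> V" "A' \<subseteq> V" "A \<inter> A' = {}" using A A' XZ by auto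
    show "A \<noteq> {}" "A' \<noteq> {}" "?O `` A \<subseteq> A" "?I\<inverse> `` A' \<subseteq> A'" using A A' by auto
    show "\<forall>v\<in>A. \<exists>x\<in>A. (x, v) \<in> ?I"
      using A_cycle max_out_edge_on_cycle[OF finE EV bal] by blast
    show "\<forall>v\<in>A'. \<exists>y\<in>A'. (v, y) \<in> ?O"
      using A'_cycle max_in_edge_on_cycle[OF finE EV bal] by (simp add: rtrancl_converse) blast
  qed
qed

lemma monotone_fixpoint_between:
  fixes T :: "('a \<Rightarrow> real) \<Rightarrow> 'a \<Rightarrow> real"
  assumes mono: "\<And>q1 q2 v. (\<forall>x\<in>V. q1 x \<le> q2 x) \<Longrightarrow> v \<in> V \<Longrightarrow> T q1 v \<le> T q2 v"
    and "\<forall>v\<in>V. l v \<le> h v" "\<forall>v\<in>V. l v \<le> T l v" "\<forall>v\<in>V. T h v \<le> h v"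
  obtains f where "\<forall>v\<in>V. l v \<le> f v \<and> f v \<le> h v \<and> T f v = f v"
proof -
  \<comment> \<open>Knaster-Tarski: the pointwise supremum of all post-fixpoints between l and h.\<close>
  define S where "S = {q. \<forall>v\<in>V. l v \<le> q v \<and> q v \<le> h v \<and> q v \<le> T q v}"
  define f where "f v = Sup {q v | q. q \<in> S}" for v
  have "l \<in> S" using assms(2,3) by (simp add: S_def)
  then have ne: "{q v | q. q \<in> S} \<noteq> {}" for v by blast
  have bdd: "bdd_above {q v | q. q \<in> S}" if "v \<in> V" for v
    using that by (intro bdd_aboveI[of _ "h v"]) (auto simp: S_def)
  have upper: "q v \<le> f v" if "q \<in> S" "v \<in> V" for q v
    unfolding f_def using that bdd by (intro cSup_upper) auto
  have f_h: "f v \<le> h v" if "v \<in> V" for v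
    unfolding f_def using that ne by (intro cSup_least) (auto simp: S_def)
  have l_f: "l v \<le> f v" if "v \<in> V" for v using upper[OF \<open>l \<in> S\<close> that] .
  have f_Tf: "f v \<le> T f v" if "v \<in> V" for v
    unfolding f_def[of v]
  proof (rule cSup_least[OF ne])
    fix x assume "x \<in> {q v | q. q \<in> S}"
    then obtain q where "q \<in> S" "x = q v" by blast
    then have "q v \<le> T q v" using that by (simp add: S_def)
    also have "\<dots> \<le> T f v" using mono upper[OF \<open>q \<in> S\<close>] that by blast
    finally show "x \<le> T f v" using \<open>x = q v\<close> by simp
  qed
  have "T f \<in> S"
    unfolding S_def
  proof (intro CollectI ballI conjI)
    fix v assume v: "v \<in> V"
    have "T l v \<le> T f v" "T f v \<le> T h v" "T f v \<le> T (T f) v"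
      using mono l_f f_h f_Tf v by blast+
    then show "l v \<le> T f v" "T f v \<le> h v" "T f v \<le> T (T f) v"
      using assms(3,4) v by force+
  qed
  then have "T f v = f v" if "v \<in> V" for v using upper f_Tf that by (simp add: order_antisym)
  then show ?thesis using that l_f f_h by blast
qed

lemma Max_image_mono:
  fixes f g :: "'a \<Rightarrow> 'b::linorder"
  assumes "finite S" "S \<noteq> {}" "\<And>x. x \<in> S \<Longrightarrow> f x \<le> g x"
  shows "Max (f ` S) \<le> Max (g ` S)"
  using assms by simp (meson Max_ge finite_imageI imageI order_trans)

lemma Min_image_mono:
  fixes f g :: "'a \<Rightarrow> 'b::linorder"
  assumes "finite S" "S \<noteq> {}" "\<And>x. x \<in> S \<Longrightarrow> f x \<le> g x"
  shows "Min (f ` S) \<le> Min (g ` S)"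
  using assms by simp (meson Min_le finite_imageI imageI order_trans)

definition max_min_mean :: "('a \<times> 'a) set \<Rightarrow> ('a \<times> 'a) set \<Rightarrow> ('a \<Rightarrow> real) \<Rightarrow> 'a \<Rightarrow> real" where
  "max_min_mean Rin Rout q v = (Max (q ` (Rin\<inverse> `` {v})) + Min (q ` (Rout `` {v}))) / 2"

context
  fixes V :: "'a set" and Rin Rout :: "('a \<times> 'a) set"
  assumes finV: "finite V" and Rin_V: "Rin \<subseteq> V \<times> V" and Rout_V: "Rout \<subseteq> V \<times> V"
    and Rin_ex: "\<And>v. v \<in> V \<Longrightarrow> \<exists>x. (x, v) \<in> Rin"
    and Rout_ex: "\<And>v. v \<in> V \<Longrightarrow> \<exists>y. (v, y) \<in> Rout"
begin

lemma finite_neighbours: "finite (Rin\<inverse> `` {v})" "finite (Rout `` {v})"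
  using Rin_V Rout_V finV by (auto intro: finite_subset)

lemma neighbours_nonempty: "v \<in> V \<Longrightarrow> Rin\<inverse> `` {v} \<noteq> {}" "v \<in> V \<Longrightarrow> Rout `` {v} \<noteq> {}"
  using Rin_ex Rout_ex by auto

lemma max_min_mean_mono:
  assumes "\<forall>x\<in>V. q1 x \<le> q2 x" "v \<in> V"
  shows "max_min_mean Rin Rout q1 v \<le> max_min_mean Rin Rout q2 v"
proof -
  have "Max (q1 ` (Rin\<inverse> `` {v})) \<le> Max (q2 ` (Rin\<inverse> `` {v}))"
    by (rule Max_image_mono[OF finite_neighbours(1) neighbours_nonempty(1)[OF assms(2)]])
      (use Rin_V assms(1) in blast)
  moreover have "Min (q1 ` (Rout `` {v})) \<le> Min (q2 ` (Rout `` {v}))"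
    by (rule Min_image_mono[OF finite_neighbours(2) neighbours_nonempty(2)[OF assms(2)]])
      (use Rout_V assms(1) in blast)
  ultimately show ?thesis by (simp add: max_min_mean_def)
qed

lemma max_min_mean_unit_interval:
  assumes "\<And>x. 0 \<le> q x \<and> q x \<le> 1" "v \<in> V"
  shows "0 \<le> max_min_mean Rin Rout q v \<and> max_min_mean Rin Rout q v \<le> 1"
proof -
  have "0 \<le> Max (q ` (Rin\<inverse> `` {v}))" "Max (q ` (Rin\<inverse> `` {v})) \<le> 1"
    "0 \<le> Min (q ` (Rout `` {v}))" "Min (q ` (Rout `` {v})) \<le> 1"
    using assms finite_neighbours neighbours_nonempty[OF assms(2)] by (auto simp: Max_ge_iff Min_le_iff)
  then show ?thesis by (simp add: max_min_mean_def)
qed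

text \<open>The hypotheses on A and A' make the indicator of A a sub-solution and the indicator of the
  complement of A' a super-solution of the fixpoint equation.\<close>

lemma indicator_le_max_min_mean:
  assumes A_out: "Rout `` A \<subseteq> A" and A_in: "\<forall>v\<in>A. \<exists>x\<in>A. (x, v) \<in> Rin" and v: "v \<in> V"
  shows "(if v \<in> A then 1 else 0) \<le> max_min_mean Rin Rout (\<lambda>x. if x \<in> A then 1 else 0) v"
proof (cases "v \<in> A")
  case True
  let ?l = "\<lambda>x. if x \<in> A then 1 else 0 :: real"
  obtain x where "x \<in> A" "x \<in> Rin\<inverse> `` {v}" using A_in True by auto
  then have "1 \<le> Max (?l ` (Rin\<inverse> `` {v}))" using finite_neighbours by (force simp: Max_ge_iff)
  moreover have "Rout `` {v} \<subseteq> A" using True A_out by auto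
  then have "1 \<le> Min (?l ` (Rout `` {v}))"
    using finite_neighbours neighbours_nonempty[OF v] by (simp add: subset_iff)
  ultimately show ?thesis using True by (simp add: max_min_mean_def)
next
  case False
  then show ?thesis using max_min_mean_unit_interval[of "\<lambda>x. if x \<in> A then 1 else 0" v] v by simp
qed

lemma max_min_mean_le_indicator:
  assumes A'_in: "Rin\<inverse> `` A' \<subseteq> A'" and A'_out: "\<forall>v\<in>A'. \<exists>y\<in>A'. (v, y) \<in> Rout" and v: "v \<in> V"
  shows "max_min_mean Rin Rout (\<lambda>x. if x \<in> A' then 0 else 1) v \<le> (if v \<in> A' then 0 else 1)"
proof (cases "v \<in> A'")
  case True
  let ?h = "\<lambda>x. if x \<in> A' then 0 else 1 :: real"
  obtain y where "y \<in> A'" "y \<in> Rout `` {v}" using A'_out True by auto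
  then have "Min (?h ` (Rout `` {v})) \<le> 0" using finite_neighbours by (force simp: Min_le_iff)
  moreover have "Rin\<inverse> `` {v} \<subseteq> A'" using True A'_in by auto
  then have "Max (?h ` (Rin\<inverse> `` {v})) \<le> 0"
    using finite_neighbours neighbours_nonempty[OF v] by (simp add: subset_iff)
  ultimately show ?thesis using True by (simp add: max_min_mean_def)
next
  case False
  then show ?thesis using max_min_mean_unit_interval[of "\<lambda>x. if x \<in> A' then 0 else 1" v] v by simp
qed

lemma max_min_mean_fixpoint_exists:
  assumes "A \<subseteq> V" "A' \<subseteq> V" "A \<inter> A' = {}"
    and A_out: "Rout `` A \<subseteq> A" and A_in: "\<forall>v\<in>A. \<exists>x\<in>A. (x, v) \<in> Rin"
    and A'_in: "Rin\<inverse> `` A' \<subseteq> A'" and A'_out: "\<forall>v\<in>A'. \<exists>y\<in>A'. (v, y) \<in> Rout"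
  obtains f :: "'a \<Rightarrow> real" where "\<And>v. v \<in> V \<Longrightarrow> 0 \<le> f v \<and> f v \<le> 1"
    "\<And>v. v \<in> A \<Longrightarrow> f v = 1" "\<And>v. v \<in> A' \<Longrightarrow> f v = 0"
    "\<And>v. v \<in> V \<Longrightarrow> max_min_mean Rin Rout f v = f v"
proof -
  let ?T = "max_min_mean Rin Rout"
  define l where "l v = (if v \<in> A then 1 else 0 :: real)" for v
  define h where "h v = (if v \<in> A' then 0 else 1 :: real)" for v
  have l_T: "\<forall>v\<in>V. l v \<le> ?T l v"
    using indicator_le_max_min_mean[OF A_out A_in] unfolding l_def by blast
  have T_h: "\<forall>v\<in>V. ?T h v \<le> h v"
    using max_min_mean_le_indicator[OF A'_in A'_out] unfolding h_def by blast
  have "\<forall>v\<in>V. l v \<le> h v" using assms(3) by (auto simp: l_def h_def)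
  then obtain f where f: "\<forall>v\<in>V. l v \<le> f v \<and> f v \<le> h v \<and> ?T f v = f v"
    using monotone_fixpoint_between[OF max_min_mean_mono _ l_T T_h] by blast
  show ?thesis
  proof
    show "0 \<le> f v \<and> f v \<le> 1" if "v \<in> V" for v
    proof -
      have "l v \<le> f v" "f v \<le> h v" using f that by auto
      then show ?thesis unfolding l_def h_def by (auto split: if_splits)
    qed
    show "f v = 1" if "v \<in> A" for v
    proof -
      have "v \<notin> A'" using that assms(3) by auto
      moreover have "l v \<le> f v" "f v \<le> h v" using f that assms(1) by auto
      ultimately show ?thesis using that by (simp add: l_def h_def)
    qed
    show "f v = 0" if "v \<in> A'" for v
    proof -
      have "v \<notin> A" using that assms(3) by auto
      moreover have "l v \<le> f v" "f v \<le> h v" using f that assms(2) by auto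
      ultimately show ?thesis using that by (simp add: l_def h_def)
    qed
    show "?T f v = f v" if "v \<in> V" for v using f that by simp
  qed
qed

end

lemma beta_out_add_small:
  assumes finE: "finite E" and y1: "(v, y1) \<in> max_out_edges E \<beta>"
    and top: "\<And>y. (v, y) \<in> max_out_edges E \<beta> \<Longrightarrow> d v y \<le> d v y1"
    and small: "\<And>y. (v, y) \<in> E \<Longrightarrow> \<bar>d v y\<bar> \<le> \<epsilon>"
    and gap: "\<And>y. (v, y) \<in> E \<Longrightarrow> \<beta> v y \<noteq> beta_out E \<beta> v \<Longrightarrow> \<beta> v y + 2 * \<epsilon> \<le> beta_out E \<beta> v"
  shows "beta_out E (\<lambda>x y. \<beta> x y + d x y) v = beta_out E \<beta> v + d v y1"
proof (rule beta_out_eqI[OF finE])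
  show "(v, y1) \<in> E" "\<beta> v y1 + d v y1 = beta_out E \<beta> v + d v y1"
    using y1 by (auto simp: max_out_edges_def)
  fix y assume vy: "(v, y) \<in> E"
  show "\<beta> v y + d v y \<le> beta_out E \<beta> v + d v y1"
  proof (cases "\<beta> v y = beta_out E \<beta> v")
    case True
    then show ?thesis using top[of y] vy by (simp add: max_out_edges_def)
  next
    case False
    then show ?thesis using gap[OF vy] small[OF vy] small[of y1] \<open>(v, y1) \<in> E\<close> by linarith
  qed
qed

lemma beta_in_add_small:
  assumes finE: "finite E" and x1: "(x1, v) \<in> max_in_edges E \<beta>"
    and top: "\<And>x. (x, v) \<in> max_in_edges E \<beta> \<Longrightarrow> d x v \<le> d x1 v"
    and small: "\<And>x. (x, v) \<in> E \<Longrightarrow> \<bar>d x v\<bar> \<le> \<epsilon>"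
    and gap: "\<And>x. (x, v) \<in> E \<Longrightarrow> \<beta> x v \<noteq> beta_in E \<beta> v \<Longrightarrow> \<beta> x v + 2 * \<epsilon> \<le> beta_in E \<beta> v"
  shows "beta_in E (\<lambda>x y. \<beta> x y + d x y) v = beta_in E \<beta> v + d x1 v"
proof (rule beta_in_eqI[OF finE])
  show "(x1, v) \<in> E" "\<beta> x1 v + d x1 v = beta_in E \<beta> v + d x1 v"
    using x1 by (auto simp: max_in_edges_def)
  fix x assume xv: "(x, v) \<in> E"
  show "\<beta> x v + d x v \<le> beta_in E \<beta> v + d x1 v"
  proof (cases "\<beta> x v = beta_in E \<beta> v")
    case True
    then show ?thesis using top[of x] xv by (simp add: max_in_edges_def)
  next
    case False
    then show ?thesis using gap[OF xv] small[OF xv] small[of x1] \<open>(x1, v) \<in> E\<close> by linarith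
  qed
qed

lemma finite_positive_lower_bound:
  fixes g :: "'a \<Rightarrow> real"
  assumes "finite S"
  obtains \<epsilon> where "0 < \<epsilon>" "\<And>s. s \<in> S \<Longrightarrow> 0 < g s \<Longrightarrow> \<epsilon> \<le> g s"
proof
  let ?M = "insert 1 (g ` {s \<in> S. 0 < g s})"
  show "0 < Min ?M" using assms by auto
  show "Min ?M \<le> g s" if "s \<in> S" "0 < g s" for s using assms that by auto
qed

lemma non_max_edges_gap:
  assumes finE: "finite E"
  obtains \<epsilon> :: real where "0 < \<epsilon>"
    "\<And>x y. (x, y) \<in> E \<Longrightarrow> \<beta> x y \<noteq> beta_out E \<beta> x \<Longrightarrow> \<beta> x y + 2 * \<epsilon> \<le> beta_out E \<beta> x"
    "\<And>x y. (x, y) \<in> E \<Longrightarrow> \<beta> x y \<noteq> beta_in E \<beta> y \<Longrightarrow> \<beta> x y + 2 * \<epsilon> \<le> beta_in E \<beta> y"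
proof -
  obtain \<epsilon>1 where "0 < \<epsilon>1"
    and \<epsilon>1: "\<And>e. e \<in> E \<Longrightarrow> 0 < (\<lambda>(x, y). beta_out E \<beta> x - \<beta> x y) e \<Longrightarrow> \<epsilon>1 \<le> (\<lambda>(x, y). beta_out E \<beta> x - \<beta> x y) e"
    using finite_positive_lower_bound[OF finE, of "\<lambda>(x, y). beta_out E \<beta> x - \<beta> x y"] by blast
  obtain \<epsilon>2 where "0 < \<epsilon>2"
    and \<epsilon>2: "\<And>e. e \<in> E \<Longrightarrow> 0 < (\<lambda>(x, y). beta_in E \<beta> y - \<beta> x y) e \<Longrightarrow> \<epsilon>2 \<le> (\<lambda>(x, y). beta_in E \<beta> y - \<beta> x y) e"
    using finite_positive_lower_bound[OF finE, of "\<lambda>(x, y). beta_in E \<beta> y - \<beta> x y"] by blast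
  show ?thesis
  proof
    show "0 < min \<epsilon>1 \<epsilon>2 / 2" using \<open>0 < \<epsilon>1\<close> \<open>0 < \<epsilon>2\<close> by simp
    show "\<beta> x y + 2 * (min \<epsilon>1 \<epsilon>2 / 2) \<le> beta_out E \<beta> x"
      if "(x, y) \<in> E" "\<beta> x y \<noteq> beta_out E \<beta> x" for x y
      using that \<epsilon>1[of "(x, y)"] beta_out_ge[OF finE that(1), of \<beta>] by simp
    show "\<beta> x y + 2 * (min \<epsilon>1 \<epsilon>2 / 2) \<le> beta_in E \<beta> y"
      if "(x, y) \<in> E" "\<beta> x y \<noteq> beta_in E \<beta> y" for x y
      using that \<epsilon>2[of "(x, y)"] beta_in_ge[OF finE that(1), of \<beta>] by simp
  qed
qed

lemma balanced_add_potential_of_mean_fixpoint: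
  assumes finE: "finite E" and EV: "E \<subseteq> V \<times> V" and bal: "balanced V E \<beta>" and "0 \<le> \<epsilon>"
    and f01: "\<And>v. v \<in> V \<Longrightarrow> 0 \<le> f v \<and> f v \<le> 1"
    and in_ne: "\<And>v. v \<in> V \<Longrightarrow> (max_in_edges E \<beta>)\<inverse> `` {v} \<noteq> {}"
    and out_ne: "\<And>v. v \<in> V \<Longrightarrow> max_out_edges E \<beta> `` {v} \<noteq> {}"
    and fixpoint: "\<And>v. v \<in> V \<Longrightarrow> max_min_mean (max_in_edges E \<beta>) (max_out_edges E \<beta>) f v = f v"
    and gap_out: "\<And>x y. (x, y) \<in> E \<Longrightarrow> \<beta> x y \<noteq> beta_out E \<beta> x \<Longrightarrow> \<beta> x y + 2 * \<epsilon> \<le> beta_out E \<beta> x"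
    and gap_in: "\<And>x y. (x, y) \<in> E \<Longrightarrow> \<beta> x y \<noteq> beta_in E \<beta> y \<Longrightarrow> \<beta> x y + 2 * \<epsilon> \<le> beta_in E \<beta> y"
  shows "balanced V E (\<lambda>x y. \<beta> x y + \<epsilon> * (f x - f y))"
  unfolding balanced_def
proof
  fix v assume v: "v \<in> V"
  let ?P = "(max_in_edges E \<beta>)\<inverse> `` {v}" and ?S = "max_out_edges E \<beta> `` {v}"
  have "max_in_edges E \<beta> \<subseteq> E" "max_out_edges E \<beta> \<subseteq> E"
    by (auto simp: max_in_edges_def max_out_edges_def)
  then have fin: "finite ?P" "finite ?S" using finE finite_subset by (metis finite_Image finite_converse)+
  obtain x1 where x1: "x1 \<in> ?P" "Max (f ` ?P) = f x1" using obtains_MAX[OF fin(1) in_ne[OF v]] .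
  obtain y1 where y1: "y1 \<in> ?S" "Min (f ` ?S) = f y1" using obtains_MIN[OF fin(2) out_ne[OF v]] .
  have x1_top: "f x \<le> f x1" if "x \<in> ?P" for x
    using x1(2) fin(1) that by (metis Max_ge finite_imageI imageI)
  have y1_bot: "f y1 \<le> f y" if "y \<in> ?S" for y
    using y1(2) fin(2) that by (metis Min_le finite_imageI imageI)
  have small: "\<bar>\<epsilon> * (f x - f y)\<bar> \<le> \<epsilon>" if "(x, y) \<in> E" for x y
  proof -
    have "x \<in> V" "y \<in> V" using EV that by auto
    then have "\<bar>f x - f y\<bar> \<le> 1" using f01 by (simp add: abs_le_iff) (smt (verit))
    then show ?thesis using \<open>0 \<le> \<epsilon>\<close> by (simp add: abs_mult mult_left_le)
  qed
  have "beta_in E (\<lambda>x y. \<beta> x y + \<epsilon> * (f x - f y)) v = beta_in E \<beta> v + \<epsilon> * (f x1 - f v)"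
    by (rule beta_in_add_small[OF finE])
      (use x1 x1_top \<open>0 \<le> \<epsilon>\<close> small gap_in in \<open>auto intro: mult_left_mono\<close>)
  also have "\<dots> = beta_out E \<beta> v + \<epsilon> * (f v - f y1)"
  proof -
    have "f x1 - f v = f v - f y1" using fixpoint[OF v] x1(2) y1(2) by (simp add: max_min_mean_def)
    then show ?thesis using bal v by (simp add: balanced_def)
  qed
  also have "\<dots> = beta_out E (\<lambda>x y. \<beta> x y + \<epsilon> * (f x - f y)) v"
    by (rule beta_out_add_small[OF finE, symmetric])
      (use y1 y1_bot \<open>0 \<le> \<epsilon>\<close> small gap_out in \<open>auto intro: mult_left_mono\<close>)
  finally show "beta_in E (\<lambda>x y. \<beta> x y + \<epsilon> * (f x - f y)) v
    = beta_out E (\<lambda>x y. \<beta> x y + \<epsilon> * (f x - f y)) v" .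
qed

lemma nonunique_if_threshold_not_strongly_connected:
  assumes finV: "finite V" and EV: "E \<subseteq> V \<times> V" and sc: "strongly_connected V E"
    and bal: "balanced V E \<beta>"
    and nsc: "\<not> strongly_connected (thr_verts E \<beta> w) (thr_edges E \<beta> w)"
  obtains \<gamma> a c where "balanced V E \<gamma>" "equivalent E \<gamma> \<beta>" "(a, c) \<in> E" "\<gamma> a c \<noteq> \<beta> a c"
proof -
  let ?O = "max_out_edges E \<beta>" and ?I = "max_in_edges E \<beta>"
  have finE: "finite E" using finV EV finite_subset by blast
  have O_V: "?O \<subseteq> V \<times> V" and I_V: "?I \<subseteq> V \<times> V"
    using EV by (auto simp: max_out_edges_def max_in_edges_def)
  obtain A A' where AA: "A \<subseteq> V" "A' \<subseteq> V" "A \<inter> A' = {}" "A \<noteq> {}" "A' \<noteq> {}"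
    and A: "?O `` A \<subseteq> A" "\<forall>v\<in>A. \<exists>x\<in>A. (x, v) \<in> ?I"
    and A': "?I\<inverse> `` A' \<subseteq> A'" "\<forall>v\<in>A'. \<exists>y\<in>A'. (v, y) \<in> ?O"
    using max_edge_classes_if_threshold_not_strongly_connected[OF finV EV sc bal nsc] by blast
  have "E \<noteq> {}" using A(2) AA(4) by (auto simp: max_in_edges_def)
  note O_ex = max_out_edge_exists[OF finE EV sc this] and I_ex = max_in_edge_exists[OF finE EV sc this]
  obtain f :: "'a \<Rightarrow> real" where f01: "\<And>v. v \<in> V \<Longrightarrow> 0 \<le> f v \<and> f v \<le> 1"
    and f_A: "\<And>v. v \<in> A \<Longrightarrow> f v = 1" and f_A': "\<And>v. v \<in> A' \<Longrightarrow> f v = 0"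
    and fixpoint: "\<And>v. v \<in> V \<Longrightarrow> max_min_mean ?I ?O f v = f v"
    using max_min_mean_fixpoint_exists[OF finV I_V O_V I_ex O_ex AA(1-3) A A'] by blast
  obtain \<epsilon> :: real where "0 < \<epsilon>"
    and gap_out: "\<And>x y. (x, y) \<in> E \<Longrightarrow> \<beta> x y \<noteq> beta_out E \<beta> x \<Longrightarrow> \<beta> x y + 2 * \<epsilon> \<le> beta_out E \<beta> x"
    and gap_in: "\<And>x y. (x, y) \<in> E \<Longrightarrow> \<beta> x y \<noteq> beta_in E \<beta> y \<Longrightarrow> \<beta> x y + 2 * \<epsilon> \<le> beta_in E \<beta> y"
    using non_max_edges_gap[OF finE] by blast
  have ne: "?I\<inverse> `` {v} \<noteq> {}" "?O `` {v} \<noteq> {}" if "v \<in> V" for v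
    using O_ex[OF that] I_ex[OF that] by auto
  define \<gamma> where "\<gamma> x y = \<beta> x y + \<epsilon> * (f x - f y)" for x y
  have balanced: "balanced V E \<gamma>"
    unfolding \<gamma>_def
    by (rule balanced_add_potential_of_mean_fixpoint[OF finE EV bal _ f01 _ _ fixpoint gap_out gap_in])
      (use \<open>0 < \<epsilon>\<close> ne in auto)
  have equivalent: "equivalent E \<gamma> \<beta>"
    using cycle_sum_potential_difference[of "\<lambda>x. \<epsilon> * f x"]
    by (simp add: equivalent_def \<gamma>_def right_diff_distrib)
  obtain u u' where "u \<in> A" "u' \<in> A'" using AA(4,5) by blast
  then have "u \<in> V" "u' \<in> V" "f u \<noteq> f u'" using AA(1,2) f_A f_A' by auto
  then obtain a c where "(a, c) \<in> E" "f a < f c"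
    using strongly_connected_increasing_edge[OF sc] by blast
  moreover have "\<gamma> a c \<noteq> \<beta> a c" using \<open>f a < f c\<close> \<open>0 < \<epsilon>\<close> by (simp add: \<gamma>_def)
  ultimately show ?thesis using that[OF balanced equivalent] by blast
qed

lemma unique_if_thresholds_strongly_connected:
  assumes "finite V" and EV: "E \<subseteq> V \<times> V" and sc: "strongly_connected V E"
    and bal: "balanced V E \<gamma>" and "equivalent E \<gamma> \<beta>"
    and thr: "\<forall>w. strongly_connected (thr_verts E \<beta> w) (thr_edges E \<beta> w)"
  shows "\<forall>(u, v)\<in>E. \<gamma> u v = \<beta> u v"
proof -
  obtain p where "\<And>x y. (x, y) \<in> E \<Longrightarrow> \<gamma> x y - \<beta> x y = p y - p x"
    using potential_if_cycle_sums_zero[OF EV sc, of "\<lambda>x y. \<gamma> x y - \<beta> x y"]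
      \<open>equivalent E \<gamma> \<beta>\<close> unfolding equivalent_def by blast
  then have pot: "\<And>x y. (x, y) \<in> E \<Longrightarrow> \<gamma> x y = \<beta> x y + (p y - p x)"
    by (simp add: algebra_simps)
  have "finite E" using \<open>finite V\<close> EV finite_subset by blast
  have "\<forall>(x, y)\<in>E. p x = p y"
    by (rule potential_constant_if_thresholds_strongly_connected[OF \<open>finite E\<close> EV sc bal _ pot])
      (use thr in blast)
  then show ?thesis using pot by auto
qed

theorem theorem1:
  fixes V :: "'a set" and E :: "('a \<times> 'a) set" and \<beta> :: "'a \<Rightarrow> 'a \<Rightarrow> real"
  assumes "finite V"
    and "E \<subseteq> V \<times> V"
    and "strongly_connected V E"
    and "balanced V E \<beta>"
  shows "(\<forall>\<gamma>. balanced V E \<gamma> \<and> equivalent E \<gamma> \<beta> \<longrightarrow> (\<forall>(u, v)\<in>E. \<gamma> u v = \<beta> u v))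
     \<longleftrightarrow> (\<forall>w::real. strongly_connected (thr_verts E \<beta> w) (thr_edges E \<beta> w))"
proof
  assume unique: "\<forall>\<gamma>. balanced V E \<gamma> \<and> equivalent E \<gamma> \<beta> \<longrightarrow> (\<forall>(u, v)\<in>E. \<gamma> u v = \<beta> u v)"
  show "\<forall>w. strongly_connected (thr_verts E \<beta> w) (thr_edges E \<beta> w)"
  proof (rule allI, rule ccontr)
    fix w assume "\<not> strongly_connected (thr_verts E \<beta> w) (thr_edges E \<beta> w)"
    then obtain \<gamma> a c where "balanced V E \<gamma>" "equivalent E \<gamma> \<beta>" "(a, c) \<in> E" "\<gamma> a c \<noteq> \<beta> a c"
      using nonunique_if_threshold_not_strongly_connected[OF assms] by blast
    then show False using unique by blast
  qed
next
  assume "\<forall>w. strongly_connected (thr_verts E \<beta> w) (thr_edges E \<beta> w)"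
  then show "\<forall>\<gamma>. balanced V E \<gamma> \<and> equivalent E \<gamma> \<beta> \<longrightarrow> (\<forall>(u, v)\<in>E. \<gamma> u v = \<beta> u v)"
    using unique_if_thresholds_strongly_connected[OF assms(1-3)] by blast
qed

end
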